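(* Every bitopological space $(X,\tau[tt],\tau[ff])$ that is Hausdorff (i.e. whose associated $\mathbb{B}$-topological space $(X,\tau)$ is Hausdorff) is d-sober.
   Context: $\mathbb{B}=\{0,1,tt,ff\}$ is the four-element Boolean algebra with bottom $0$, top $1$, and $tt,ff$ incomparable complements; $a\to b=\neg a\vee b$. A bitopological space $(X,\tau[tt],\tau[ff])$ corresponds to the $\mathbb{B}$-topology $\tau=\{\lambda\colon X\to\mathbb{B}: \lambda[tt]\in\tau[tt],\ \lambda[ff]\in\tau[ff]\}$, where $\lambda[b]=\{x:\lambda(x)\ge b\}$. Specialization $\mathbb{B}$-order: $\Omega(\tau)(x,y)=\bigwedge_{\lambda\in\tau}(\lambda(x)\to\lambda(y))$. $(X,\tau)$ is $T_0$ if $\Omega(\tau)(x,y)=1=\Omega(\tau)(y,x)$ implies $x=y$; it is $R_1$ if $\Omega(\tau)$, viewed as a map $X\times X\to\mathbb{B}$, is a closed set of the product $\mathbb{B}$-topological space $(X,\tau)\times(X,\tau)$ (the $\mathbb{B}$-topology on $X\times X$ generated by $\{\lambda\circ\pi_1,\lambda\circ\pi_2:\lambda\in\tau\}$ together with constants; a $\mathbb{B}$-valued set $\mu$ is closed if $\neg\mu$ is open); it is Hausdorff if it is $T_0$ and $R_1$. (Equivalently, Hausdorff means: the topological space $(X,\tau[tt]\vee\tau[ff])$ is $T_0$ and both $(X,\tau[tt])$ and $(X,\tau[ff])$ are $R_1$, where a topological space is $R_1$ if any two points with distinct closures of their singletons have disjoint neighbourhoods.) A d-point of $(X,\tau[tt],\tau[ff])$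 is a pair of frame homomorphisms $p_{tt}\colon\tau[tt]\to\{0,1\}$, $p_{ff}\colon\tau[ff]\to\{0,1\}$ (preserving finite meets and arbitrary joins) such that: if $U\in\tau[tt]$, $V\in\tau[ff]$ and $U\cap V=\emptyset$ then $p_{tt}(U)=0$ or $p_{ff}(V)=0$; and if $U\cup V=X$ then $p_{tt}(U)=1$ or $p_{ff}(V)=1$. Each $x\in X$ gives the d-point $[x]$ with $[x]_{tt}(U)=1\iff x\in U$ and $[x]_{ff}(V)=1\iff x\in V$. The space is d-sober if every d-point equals $[x]$ for a unique $x\in X$. *)

theory Defs
  imports "HOL-Analysis.Analysis"
begin

datatype bb = B0 | B1 | Btt | Bff

definition ble :: "bb \<Rightarrow> bb \<Rightarrow> bool" where
  "ble a b \<longleftrightarrow> a = B0 \<or> b = B1 \<or> a = b"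

text \<open>Build an element from its two "coordinates" (a \<ge> tt, a \<ge> ff).\<close>
definition bmk :: "bool \<Rightarrow> bool \<Rightarrow> bb" where
  "bmk p q = (if p \<and> q then B1 else if p then Btt else if q then Bff else B0)"

definition bmeet :: "bb \<Rightarrow> bb \<Rightarrow> bb" where
  "bmeet a b = bmk (ble Btt a \<and> ble Btt b) (ble Bff a \<and> ble Bff b)"

definition bjoin :: "bb \<Rightarrow> bb \<Rightarrow> bb" where
  "bjoin a b = bmk (ble Btt a \<or> ble Btt b) (ble Bff a \<or> ble Bff b)"

definition bneg :: "bb \<Rightarrow> bb" where
  "bneg a = (case a of B0 \<Rightarrow> B1 | B1 \<Rightarrow> B0 | Btt \<Rightarrow> Bff | Bff \<Rightarrow> Btt)"

definition bimp :: "bb \<Rightarrow> bb \<Rightarrow> bb" where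
  "bimp a b = bjoin (bneg a) b"

definition bInf :: "bb set \<Rightarrow> bb" where
  "bInf S = bmk (\<forall>s\<in>S. ble Btt s) (\<forall>s\<in>S. ble Bff s)"

definition bSup :: "bb set \<Rightarrow> bb" where
  "bSup S = bmk (\<exists>s\<in>S. ble Btt s) (\<exists>s\<in>S. ble Bff s)"

text \<open>A bitopological space on the carrier X is a pair of topologies T1 = tau[tt],
  T2 = tau[ff] with topspace X. B-valued sets are functions 'a => bb; only their
  values on X matter. lambda[b] = {x in X. lambda x >= b}.\<close>

definition bcut :: "'a set \<Rightarrow> ('a \<Rightarrow> bb) \<Rightarrow> bb \<Rightarrow> 'a set" where
  "bcut X l b = {x \<in> X. ble b (l x)}"

definition btop :: "'a topology \<Rightarrow> 'a topology \<Rightarrow> ('a \<Rightarrow> bb) set" where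
  "btop T1 T2 = {l. openin T1 (bcut (topspace T1) l Btt) \<and> openin T2 (bcut (topspace T2) l Bff)}"

definition spec_order :: "'a topology \<Rightarrow> 'a topology \<Rightarrow> 'a \<Rightarrow> 'a \<Rightarrow> bb" where
  "spec_order T1 T2 x y = bInf {bimp (l x) (l y) | l. l \<in> btop T1 T2}"

definition btop_T0 :: "'a topology \<Rightarrow> 'a topology \<Rightarrow> bool" where
  "btop_T0 T1 T2 \<longleftrightarrow> (\<forall>x\<in>topspace T1. \<forall>y\<in>topspace T1.
     spec_order T1 T2 x y = B1 \<and> spec_order T1 T2 y x = B1 \<longrightarrow> x = y)"

inductive_set bgen :: "('b \<Rightarrow> bb) set \<Rightarrow> ('b \<Rightarrow> bb) set" for G where
  base: "g \<in> G \<Longrightarrow> g \<in> bgen G"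
| const: "(\<lambda>_. c) \<in> bgen G"
| meet: "f \<in> bgen G \<Longrightarrow> g \<in> bgen G \<Longrightarrow> (\<lambda>p. bmeet (f p) (g p)) \<in> bgen G"
| join: "\<forall>f\<in>F. f \<in> bgen G \<Longrightarrow> (\<lambda>p. bSup {f p | f. f \<in> F}) \<in> bgen G"

definition prod_btop :: "('a \<Rightarrow> bb) set \<Rightarrow> ('a \<times> 'a \<Rightarrow> bb) set" where
  "prod_btop tau = bgen ({(\<lambda>p. l (fst p)) | l. l \<in> tau} \<union> {(\<lambda>p. l (snd p)) | l. l \<in> tau})"

text \<open>R1: the specialization order, as a B-valued set on X x X, is closed in the
  product, i.e. its negation is open (agrees on X x X with an open B-valued set).\<close>
definition btop_R1 :: "'a topology \<Rightarrow> 'a topology \<Rightarrow> bool" where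
  "btop_R1 T1 T2 \<longleftrightarrow> (\<exists>nu\<in>prod_btop (btop T1 T2).
     \<forall>x\<in>topspace T1. \<forall>y\<in>topspace T1. nu (x, y) = bneg (spec_order T1 T2 x y))"

definition btop_Hausdorff :: "'a topology \<Rightarrow> 'a topology \<Rightarrow> bool" where
  "btop_Hausdorff T1 T2 \<longleftrightarrow> btop_T0 T1 T2 \<and> btop_R1 T1 T2"

text \<open>Frame homomorphism from the opens of T to {0,1}, represented as a predicate
  on sets (only its values on open sets matter).\<close>
definition frame_hom2 :: "'a topology \<Rightarrow> ('a set \<Rightarrow> bool) \<Rightarrow> bool" where
  "frame_hom2 T p \<longleftrightarrow>
     p (topspace T) \<and>
     (\<forall>U V. openin T U \<and> openin T V \<longrightarrow> p (U \<inter> V) = (p U \<and> p V)) \<and>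
     (\<forall>\<U>. (\<forall>U\<in>\<U>. openin T U) \<longrightarrow> p (\<Union>\<U>) = (\<exists>U\<in>\<U>. p U))"

definition d_point :: "'a topology \<Rightarrow> 'a topology \<Rightarrow> ('a set \<Rightarrow> bool) \<Rightarrow> ('a set \<Rightarrow> bool) \<Rightarrow> bool" where
  "d_point T1 T2 p q \<longleftrightarrow> frame_hom2 T1 p \<and> frame_hom2 T2 q \<and>
     (\<forall>U V. openin T1 U \<and> openin T2 V \<and> U \<inter> V = {} \<longrightarrow> \<not> p U \<or> \<not> q V) \<and>
     (\<forall>U V. openin T1 U \<and> openin T2 V \<and> U \<union> V = topspace T1 \<longrightarrow> p U \<or> q V)"

definition d_point_eq :: "'a topology \<Rightarrow> 'a topology \<Rightarrow> ('a set \<Rightarrow> bool) \<times> ('a set \<Rightarrow> bool)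
    \<Rightarrow> ('a set \<Rightarrow> bool) \<times> ('a set \<Rightarrow> bool) \<Rightarrow> bool" where
  "d_point_eq T1 T2 P Q \<longleftrightarrow> (\<forall>U. openin T1 U \<longrightarrow> fst P U = fst Q U) \<and>
                              (\<forall>V. openin T2 V \<longrightarrow> snd P V = snd Q V)"

definition pt_of :: "'a \<Rightarrow> ('a set \<Rightarrow> bool) \<times> ('a set \<Rightarrow> bool)" where
  "pt_of x = ((\<lambda>U. x \<in> U), (\<lambda>V. x \<in> V))"

definition d_sober :: "'a topology \<Rightarrow> 'a topology \<Rightarrow> bool" where
  "d_sober T1 T2 \<longleftrightarrow> (\<forall>p q. d_point T1 T2 p q \<longrightarrow>
     (\<exists>!x. x \<in> topspace T1 \<and> d_point_eq T1 T2 (p, q) (pt_of x)))"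

end

theory Submission
  imports Defs
begin

text \<open>The tt-part of the specialization B-order of a bitopological space is the specialization
  preorder of the first topology and its ff-part that of the second, so T0 says that points are
  separated by the join of the two topologies. The negation of the specialization B-order has as
  tt-cut the set of pairs not related by the specialization preorder of the first topology;
  R1 makes that cut open in the product, hence a union of open rectangles, which yields disjoint
  neighbourhoods and makes each topology an R1 space. Given a d-point (p, q), let K1 (resp. K2)
  be the largest open set on which p (resp. q) vanishes. By the covering condition on d-points,
  K1 and K2 do not cover X, and in an R1 space any point outside K1 already represents p
  (likewise for q). A point outside both represents (p, q), and T0 makes it unique.\<close>

lemma ble_bmk: "ble Btt (bmk P Q) = P" "ble Bff (bmk P Q) = Q"
  by (auto simp: ble_def bmk_def)

lemma ble_bneg: "ble Btt (bneg a) = (\<not> ble Btt a)" "ble Bff (bneg a) = (\<not> ble Bff a)"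
  by (cases a; simp add: ble_def bneg_def)+

lemma eq_B1_iff_ble: "a = B1 \<longleftrightarrow> ble Btt a \<and> ble Bff a"
  by (cases a) (auto simp: ble_def)

lemma ble_bmeet: "c = Btt \<or> c = Bff \<Longrightarrow> ble c (bmeet a b) \<longleftrightarrow> ble c a \<and> ble c b"
  by (auto simp: bmeet_def ble_bmk)

lemma ble_bSup: "c = Btt \<or> c = Bff \<Longrightarrow> ble c (bSup S) \<longleftrightarrow> (\<exists>s\<in>S. ble c s)"
  by (auto simp: bSup_def ble_bmk)

lemma ble_bInf: "c = Btt \<or> c = Bff \<Longrightarrow> ble c (bInf S) \<longleftrightarrow> (\<forall>s\<in>S. ble c s)"
  by (auto simp: bInf_def ble_bmk)

lemma ble_bimp: "c = Btt \<or> c = Bff \<Longrightarrow> ble c (bimp a b) \<longleftrightarrow> (ble c a \<longrightarrow> ble c b)"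
  by (auto simp: bimp_def bjoin_def ble_bmk ble_bneg)

definition spec_le :: "'a topology \<Rightarrow> 'a \<Rightarrow> 'a \<Rightarrow> bool" where
  "spec_le T x y \<longleftrightarrow> (\<forall>U. openin T U \<longrightarrow> x \<in> U \<longrightarrow> y \<in> U)"

lemma ble_Btt_spec_order:
  assumes "x \<in> topspace T1" "y \<in> topspace T1"
  shows "ble Btt (spec_order T1 T2 x y) \<longleftrightarrow> spec_le T1 x y"
proof
  assume le: "ble Btt (spec_order T1 T2 x y)"
  show "spec_le T1 x y" unfolding spec_le_def
  proof (intro allI impI)
    fix U assume U: "openin T1 U" "x \<in> U"
    define l where "l = (\<lambda>z. if z \<in> U then Btt else B0)"
    have "bcut (topspace T1) l Btt = U" "bcut (topspace T2) l Bff = {}"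
      using openin_subset[OF U(1)] by (auto simp: bcut_def l_def ble_def)
    with U(1) have "l \<in> btop T1 T2" by (simp add: btop_def)
    with le have "ble Btt (bimp (l x) (l y))" by (auto simp: spec_order_def ble_bInf)
    then have "ble Btt (l x) \<longrightarrow> ble Btt (l y)" by (simp add: ble_bimp)
    with U(2) show "y \<in> U" by (auto simp: l_def ble_def split: if_splits)
  qed
next
  assume "spec_le T1 x y"
  with assms show "ble Btt (spec_order T1 T2 x y)"
    by (auto simp: spec_order_def ble_bInf ble_bimp btop_def bcut_def spec_le_def)
qed

lemma ble_Bff_spec_order:
  assumes "x \<in> topspace T2" "y \<in> topspace T2"
  shows "ble Bff (spec_order T1 T2 x y) \<longleftrightarrow> spec_le T2 x y"
proof
  assume le: "ble Bff (spec_order T1 T2 x y)"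
  show "spec_le T2 x y" unfolding spec_le_def
  proof (intro allI impI)
    fix V assume V: "openin T2 V" "x \<in> V"
    define l where "l = (\<lambda>z. if z \<in> V then Bff else B0)"
    have "bcut (topspace T1) l Btt = {}" "bcut (topspace T2) l Bff = V"
      using openin_subset[OF V(1)] by (auto simp: bcut_def l_def ble_def)
    with V(1) have "l \<in> btop T1 T2" by (simp add: btop_def)
    with le have "ble Bff (bimp (l x) (l y))" by (auto simp: spec_order_def ble_bInf)
    then have "ble Bff (l x) \<longrightarrow> ble Bff (l y)" by (simp add: ble_bimp)
    with V(2) show "y \<in> V" by (auto simp: l_def ble_def split: if_splits)
  qed
next
  assume "spec_le T2 x y"
  with assms show "ble Bff (spec_order T1 T2 x y)"
    by (auto simp: spec_order_def ble_bInf ble_bimp btop_def bcut_def spec_le_def)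
qed

lemma spec_order_eq_B1_iff:
  assumes "topspace T1 = topspace T2" "x \<in> topspace T1" "y \<in> topspace T1"
  shows "spec_order T1 T2 x y = B1 \<longleftrightarrow> spec_le T1 x y \<and> spec_le T2 x y"
  using assms by (simp add: eq_B1_iff_ble ble_Btt_spec_order ble_Bff_spec_order)

lemma pt_of_eq_imp_eq_if_btop_T0:
  assumes "topspace T1 = topspace T2" "btop_T0 T1 T2"
    and "x \<in> topspace T1" "y \<in> topspace T1" "d_point_eq T1 T2 (pt_of x) (pt_of y)"
  shows "x = y"
proof -
  have "spec_le T1 x y" "spec_le T1 y x" "spec_le T2 x y" "spec_le T2 y x"
    using assms(5) by (auto simp: d_point_eq_def pt_of_def spec_le_def)
  with assms show ?thesis
    by (simp add: btop_T0_def spec_order_eq_B1_iff)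
qed

lemma openin_bcut_bgen:
  assumes "f \<in> bgen G" "c = Btt \<or> c = Bff"
    and "\<And>g. g \<in> G \<Longrightarrow> openin S (bcut (topspace S) g c)"
  shows "openin S (bcut (topspace S) f c)"
  using assms(1)
proof induct
  case (base g)
  then show ?case by (rule assms(3))
next
  case (const d)
  show ?case by (cases "ble c d") (simp_all add: bcut_def)
next
  case (meet f g)
  have "bcut (topspace S) (\<lambda>z. bmeet (f z) (g z)) c = bcut (topspace S) f c \<inter> bcut (topspace S) g c"
    using ble_bmeet[OF assms(2)] by (auto simp: bcut_def)
  with meet show ?case by auto
next
  case (join F)
  have "bcut (topspace S) (\<lambda>z. bSup {f z |f. f \<in> F}) c = (\<Union>f\<in>F. bcut (topspace S) f c)"
    using ble_bSup[OF assms(2)] by (auto simp: bcut_def)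
  with join show ?case by auto
qed

lemma openin_bcut_prod_btop:
  assumes "nu \<in> prod_btop tau" "c = Btt \<or> c = Bff"
    and "\<And>l. l \<in> tau \<Longrightarrow> openin T (bcut (topspace T) l c)"
  shows "openin (prod_topology T T) (bcut (topspace T \<times> topspace T) nu c)"
proof -
  have "openin (prod_topology T T) (bcut (topspace (prod_topology T T)) g c)"
    if gen: "g \<in> {(\<lambda>z. l (fst z)) | l. l \<in> tau} \<union> {(\<lambda>z. l (snd z)) | l. l \<in> tau}" for g
  proof -
    obtain l where l: "l \<in> tau" and g: "g = (\<lambda>z. l (fst z)) \<or> g = (\<lambda>z. l (snd z))"
      using gen by blast
    have "bcut (topspace (prod_topology T T)) g c = bcut (topspace T) l c \<times> topspace T
        \<or> bcut (topspace (prod_topology T T)) g c = topspace T \<times> bcut (topspace T) l c"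
      using g by (auto simp: bcut_def)
    with assms(3)[OF l] show ?thesis by (auto simp: openin_prod_Times_iff)
  qed
  from openin_bcut_bgen[OF assms(1)[unfolded prod_btop_def] assms(2) this] show ?thesis
    by simp
qed

definition R1_space :: "'a topology \<Rightarrow> bool" where
  "R1_space T \<longleftrightarrow> (\<forall>x\<in>topspace T. \<forall>y\<in>topspace T. \<not> spec_le T x y \<longrightarrow>
     (\<exists>U V. openin T U \<and> openin T V \<and> x \<in> U \<and> y \<in> V \<and> disjnt U V))"

lemma R1_space_if_openin_not_spec_le:
  assumes "openin (prod_topology T T) {(x, y) \<in> topspace T \<times> topspace T. \<not> spec_le T x y}"
  shows "R1_space T"
  unfolding R1_space_def
proof (intro ballI impI)
  define S where "S = {(x, y) \<in> topspace T \<times> topspace T. \<not> spec_le T x y}"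
  fix x y assume "x \<in> topspace T" "y \<in> topspace T" "\<not> spec_le T x y"
  then have "(x, y) \<in> S"
    by (simp add: S_def)
  then obtain U V where UV: "openin T U" "openin T V" "x \<in> U" "y \<in> V" "U \<times> V \<subseteq> S"
    using assms openin_prod_topology_alt[of T T S] unfolding S_def[symmetric] by blast
  have "disjnt U V"
  proof (rule ccontr)
    assume "\<not> disjnt U V"
    then obtain z where "(z, z) \<in> U \<times> V"
      by (auto simp: disjnt_def)
    with UV(5) have "(z, z) \<in> S" by blast
    then show False
      by (simp add: S_def spec_le_def)
  qed
  with UV(1-4) show "\<exists>U V. openin T U \<and> openin T V \<and> x \<in> U \<and> y \<in> V \<and> disjnt U V"
    by blast
qed

lemma R1_spaces_if_btop_R1:
  assumes "topspace T1 = topspace T2" "btop_R1 T1 T2"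
  shows "R1_space T1" "R1_space T2"
proof -
  obtain nu where nu: "nu \<in> prod_btop (btop T1 T2)"
    and nu_eq: "\<And>x y. x \<in> topspace T1 \<Longrightarrow> y \<in> topspace T1 \<Longrightarrow> nu (x, y) = bneg (spec_order T1 T2 x y)"
    using assms(2) unfolding btop_R1_def by blast
  have "bcut (topspace T1 \<times> topspace T1) nu Btt
      = {(x, y) \<in> topspace T1 \<times> topspace T1. \<not> spec_le T1 x y}"
    by (auto simp: bcut_def nu_eq ble_bneg ble_Btt_spec_order)
  moreover have "openin (prod_topology T1 T1) (bcut (topspace T1 \<times> topspace T1) nu Btt)"
    using openin_bcut_prod_btop[OF nu] by (simp add: btop_def)
  ultimately show "R1_space T1"
    by (simp add: R1_space_if_openin_not_spec_le)
  have "bcut (topspace T2 \<times> topspace T2) nu Bff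
      = {(x, y) \<in> topspace T2 \<times> topspace T2. \<not> spec_le T2 x y}"
    using assms(1) by (auto simp: bcut_def nu_eq ble_bneg ble_Bff_spec_order)
  moreover have "openin (prod_topology T2 T2) (bcut (topspace T2 \<times> topspace T2) nu Bff)"
    using openin_bcut_prod_btop[OF nu] by (simp add: btop_def)
  ultimately show "R1_space T2"
    by (simp add: R1_space_if_openin_not_spec_le)
qed

lemma frame_hom2_Int:
  "frame_hom2 T p \<Longrightarrow> openin T U \<Longrightarrow> openin T V \<Longrightarrow> p (U \<inter> V) \<longleftrightarrow> p U \<and> p V"
  by (simp add: frame_hom2_def)

lemma frame_hom2_Union:
  "frame_hom2 T p \<Longrightarrow> (\<And>U. U \<in> \<U> \<Longrightarrow> openin T U) \<Longrightarrow> p (\<Union>\<U>) \<longleftrightarrow> (\<exists>U\<in>\<U>. p U)"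
  by (simp add: frame_hom2_def)

lemma frame_hom2_empty: "frame_hom2 T p \<Longrightarrow> \<not> p {}"
  using frame_hom2_Union[of T p "{}"] by simp

lemma frame_hom2_kernel: "frame_hom2 T p \<Longrightarrow> \<not> p (\<Union>{U. openin T U \<and> \<not> p U})"
  using frame_hom2_Union[of T p "{U. openin T U \<and> \<not> p U}"] by auto

lemma frame_hom2_iff_mem_if_not_in_kernel:
  assumes p: "frame_hom2 T p" and "R1_space T"
    and x: "x \<in> topspace T" "x \<notin> \<Union>{U. openin T U \<and> \<not> p U}" and U: "openin T U"
  shows "p U \<longleftrightarrow> x \<in> U"
proof
  assume pU: "p U"
  show "x \<in> U"
  proof (rule ccontr)
    assume "x \<notin> U"
    \<comment> \<open>Every point of U has a neighbourhood disjoint from a neighbourhood of x, and p holds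
      on the latter since x avoids the kernel, so p fails on the former; these cover U.\<close>
    define \<W> where "\<W> = {W \<inter> U | W. openin T W \<and> (\<exists>V. openin T V \<and> x \<in> V \<and> disjnt W V)}"
    have "U \<subseteq> \<Union>\<W>"
    proof
      fix y assume y: "y \<in> U"
      have "\<not> spec_le T y x"
        using U y \<open>x \<notin> U\<close> by (auto simp: spec_le_def)
      moreover have "y \<in> topspace T"
        using U y openin_subset by blast
      ultimately obtain W V where "openin T W" "openin T V" "y \<in> W" "x \<in> V" "disjnt W V"
        using \<open>R1_space T\<close> x(1) unfolding R1_space_def by blast
      with y show "y \<in> \<Union>\<W>"
        unfolding \<W>_def by blast
    qed
    then have "\<Union>\<W> = U"
      by (auto simp: \<W>_def)
    moreover have "\<And>W'. W' \<in> \<W> \<Longrightarrow> openin T W'"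
      using U by (auto simp: \<W>_def)
    ultimately have "\<exists>W'\<in>\<W>. p W'"
      using frame_hom2_Union[OF p, of \<W>] pU by simp
    then obtain W V where W: "openin T W" "p (W \<inter> U)"
      and V: "openin T V" "x \<in> V" "disjnt W V"
      unfolding \<W>_def by blast
    have "p V" using V x(2) by blast
    with W have "p (W \<inter> V)" using frame_hom2_Int[OF p] V(1) U by auto
    with V(3) show False using frame_hom2_empty[OF p] by (simp add: disjnt_def)
  qed
next
  assume "x \<in> U"
  with x(2) U show "p U" by blast
qed

lemma d_point_represented_if_R1_spaces:
  assumes "topspace T1 = topspace T2" "R1_space T1" "R1_space T2" and pq: "d_point T1 T2 p q"
  shows "\<exists>x\<in>topspace T1. d_point_eq T1 T2 (p, q) (pt_of x)"
proof -
  define K1 where "K1 = \<Union>{U. openin T1 U \<and> \<not> p U}"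
  define K2 where "K2 = \<Union>{V. openin T2 V \<and> \<not> q V}"
  have p: "frame_hom2 T1 p" and q: "frame_hom2 T2 q"
    and cover: "\<And>U V. openin T1 U \<Longrightarrow> openin T2 V \<Longrightarrow> U \<union> V = topspace T1 \<Longrightarrow> p U \<or> q V"
    using pq by (simp_all add: d_point_def)
  have K: "openin T1 K1" "openin T2 K2"
    by (auto simp: K1_def K2_def)
  moreover have "\<not> p K1" "\<not> q K2"
    unfolding K1_def K2_def by (simp_all add: frame_hom2_kernel p q)
  ultimately have "K1 \<union> K2 \<noteq> topspace T1"
    using cover by blast
  moreover have "K1 \<union> K2 \<subseteq> topspace T1"
    using assms(1) K openin_subset by auto
  ultimately obtain x where x: "x \<in> topspace T1" "x \<notin> K1" "x \<notin> K2"
    by blast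
  have "p U \<longleftrightarrow> x \<in> U" if "openin T1 U" for U
    using frame_hom2_iff_mem_if_not_in_kernel[OF p \<open>R1_space T1\<close> x(1) _ that] x(2)
    by (simp add: K1_def)
  moreover have "q V \<longleftrightarrow> x \<in> V" if "openin T2 V" for V
    using frame_hom2_iff_mem_if_not_in_kernel[OF q \<open>R1_space T2\<close> _ _ that] x(1,3) assms(1)
    by (simp add: K2_def)
  ultimately have "d_point_eq T1 T2 (p, q) (pt_of x)"
    by (simp add: d_point_eq_def pt_of_def)
  with x(1) show ?thesis by blast
qed

theorem mainTheorem5:
  fixes T1 T2 :: "'a topology"
  assumes "topspace T1 = topspace T2"
    and "btop_Hausdorff T1 T2"
  shows "d_sober T1 T2"
  unfolding d_sober_def
proof (intro allI impI)
  fix p q assume "d_point T1 T2 p q"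
  have T0: "btop_T0 T1 T2" and R1: "btop_R1 T1 T2"
    using assms(2) by (auto simp: btop_Hausdorff_def)
  obtain x where x: "x \<in> topspace T1" "d_point_eq T1 T2 (p, q) (pt_of x)"
    using d_point_represented_if_R1_spaces[OF assms(1) R1_spaces_if_btop_R1[OF assms(1) R1]
        \<open>d_point T1 T2 p q\<close>] by blast
  have "y = x" if "y \<in> topspace T1" "d_point_eq T1 T2 (p, q) (pt_of y)" for y
  proof (rule pt_of_eq_imp_eq_if_btop_T0[OF assms(1) T0 that(1) x(1)])
    show "d_point_eq T1 T2 (pt_of y) (pt_of x)"
      using that(2) x(2) by (simp add: d_point_eq_def)
  qed
  with x show "\<exists>!x. x \<in> topspace T1 \<and> d_point_eq T1 T2 (p, q) (pt_of x)"
    by blast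
qed

end
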